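(* Let $k\hookrightarrow K$ be a finite field extension, $V$ a $K$-vector space and $\varphi\in\mathrm{End}_K(V)$ finite potent such that $1+\varphi$ is invertible. Then $$\operatorname{Det}^k_V(1+\varphi)=N_{K/k}\big[\operatorname{Det}^K_V(1+\varphi)\big],$$ where $N_{K/k}\colon K^\times\to k^\times$ is the norm of the extension and $V$ is regarded as a $k$-vector space on the left-hand side.
   Context: An endomorphism $\varphi$ of a vector space $U$ over a field $F$ is finite potent if $\varphi^nU$ is finite dimensional for some $n$; then $\operatorname{Det}^F_U(1+\varphi)$ is the ordinary determinant over $F$ of $1+\varphi$ restricted to any finite-dimensional $\varphi$-invariant $F$-subspace $W$ with $\varphi^nU\subseteq W$ for some $n$. *)

theory Defs
  imports Main "Jordan_Normal_Form.Determinant"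
begin

definition fin_dim_subspace :: "('s::field \<Rightarrow> 'v::ab_group_add \<Rightarrow> 'v) \<Rightarrow> 'v set \<Rightarrow> bool" where
  "fin_dim_subspace sc W \<longleftrightarrow> module.subspace sc W \<and>
     (\<exists>B. finite B \<and> B \<subseteq> W \<and> module.span sc B = W)"

definition lin_det :: "('s::field \<Rightarrow> 'v::ab_group_add \<Rightarrow> 'v) \<Rightarrow> 'v set \<Rightarrow> ('v \<Rightarrow> 'v) \<Rightarrow> 's" where
  "lin_det sc W f =
     (let bs = (SOME bs. distinct bs \<and> \<not> module.dependent sc (set bs) \<and> module.span sc (set bs) = W)
      in det (mat (length bs) (length bs)
                (\<lambda>(i, j). module.representation sc (set bs) (f (bs ! j)) (bs ! i))))"

definition finite_potent :: "('s::field \<Rightarrow> 'v::ab_group_add \<Rightarrow> 'v) \<Rightarrow> ('v \<Rightarrow> 'v) \<Rightarrow> bool" where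
  "finite_potent sc \<phi> \<longleftrightarrow> (\<exists>n. fin_dim_subspace sc (module.span sc (range (\<phi> ^^ n))))"

definition Det_one_plus :: "('s::field \<Rightarrow> 'v::ab_group_add \<Rightarrow> 'v) \<Rightarrow> ('v \<Rightarrow> 'v) \<Rightarrow> 's" where
  "Det_one_plus sc \<phi> =
     (let W = (SOME W. fin_dim_subspace sc W \<and> \<phi> ` W \<subseteq> W \<and> (\<exists>n. range (\<phi> ^^ n) \<subseteq> W))
      in lin_det sc W (\<lambda>v. v + \<phi> v))"

definition field_norm :: "('k::field \<Rightarrow> 'K::field) \<Rightarrow> 'K \<Rightarrow> 'k" where
  "field_norm \<iota> x = lin_det (\<lambda>a y. \<iota> a * y) UNIV (\<lambda>y. x * y)"

end

theory Submission
  imports Defs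
begin

text \<open>
  If a linear map \<open>f\<close> of a finite-dimensional space \<open>W\<close> preserves a subspace \<open>U\<close>, then
  \<open>det f\<close> is the determinant on \<open>U\<close> times the determinant of the map induced on a complement.
  The map induced by a nilpotent map is nilpotent, so \<open>det (1 + n) = 1\<close> for nilpotent \<open>n\<close>.
  Consequently \<open>Det (1 + \<phi>)\<close> is the determinant of \<open>1 + \<phi>\<close> on \<open>\<phi>\<^sup>N V\<close> for all large \<open>N\<close>,
  over \<open>k\<close> and over \<open>K\<close> alike, and this is a finite-dimensional \<open>K\<close>-space.

  It remains to show \<open>det\<^sub>k f = N\<^sub>K\<^sub>/\<^sub>k (det\<^sub>K f)\<close> for an endomorphism \<open>f\<close> of a
  finite-dimensional \<open>K\<close>-space, by induction on the dimension. If the first basis vector \<open>e\<close>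
  is an eigenvector with eigenvalue \<open>c\<close>, the line \<open>K e\<close> contributes \<open>c\<close> over \<open>K\<close> and
  \<open>N(c)\<close> over \<open>k\<close>, the complement is handled by induction, and \<open>N\<close> is multiplicative.
  In general, \<open>f\<close> is first composed with \<open>1 + n\<close> for a square-zero \<open>n\<close> making \<open>e\<close> an
  eigenvector; this changes neither determinant.
\<close>

lemma sum_set_conv_sum_nth:
  "distinct xs \<Longrightarrow> (\<Sum>x\<in>set xs. g x) = (\<Sum>i<length xs. g (xs ! i))"
  by (rule sum.reindex_bij_betw[symmetric], rule bij_betw_nth) auto

lemma funpow_image_subset: "f ` A \<subseteq> A \<Longrightarrow> x \<in> A \<Longrightarrow> (f ^^ n) x \<in> A"
  by (induction n) auto

lemma range_funpow_antimono:
  fixes f :: "'a \<Rightarrow> 'a"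
  assumes "m \<le> n"
  shows "range (f ^^ n) \<subseteq> range (f ^^ m)"
proof -
  have "f ^^ n = f ^^ m \<circ> f ^^ (n - m)"
    using assms by (simp flip: funpow_add)
  then show ?thesis by auto
qed

lemma image_range_funpow_subset: "f ` range (f ^^ n) \<subseteq> range (f ^^ n)"
  by (auto simp: funpow_swap1)

section \<open>Matrices and determinants of endomorphisms\<close>

definition basis_list :: "('s::field \<Rightarrow> 'v::ab_group_add \<Rightarrow> 'v) \<Rightarrow> 'v set \<Rightarrow> 'v list \<Rightarrow> bool" where
  "basis_list sc W bs \<longleftrightarrow>
     distinct bs \<and> \<not> module.dependent sc (set bs) \<and> module.span sc (set bs) = W"

text \<open>The matrix of \<open>f\<close> from the basis \<open>bs\<close> to the basis \<open>cs\<close> (target basis first).\<close>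
definition rep_mat :: "('s::field \<Rightarrow> 'v::ab_group_add \<Rightarrow> 'v) \<Rightarrow> 'v list \<Rightarrow> 'v list \<Rightarrow> ('v \<Rightarrow> 'v) \<Rightarrow> 's mat" where
  "rep_mat sc cs bs f =
     mat (length cs) (length bs) (\<lambda>(i, j). module.representation sc (set cs) (f (bs ! j)) (cs ! i))"

lemma rep_mat_index [simp]:
  "i < length cs \<Longrightarrow> j < length bs \<Longrightarrow>
     rep_mat sc cs bs f $$ (i, j) = module.representation sc (set cs) (f (bs ! j)) (cs ! i)"
  "dim_row (rep_mat sc cs bs f) = length cs" "dim_col (rep_mat sc cs bs f) = length bs"
  by (auto simp: rep_mat_def)

lemma rep_mat_carrier [simp]: "rep_mat sc cs bs f \<in> carrier_mat (length cs) (length bs)"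
  by (auto simp: rep_mat_def)

definition proj_along :: "('s::field \<Rightarrow> 'v::ab_group_add \<Rightarrow> 'v) \<Rightarrow> 'v set \<Rightarrow> 'v set \<Rightarrow> ('v \<Rightarrow> 'v) \<Rightarrow> bool" where
  "proj_along sc U U' p \<longleftrightarrow> Vector_Spaces.linear sc sc p \<and> (\<forall>x\<in>U. p x = 0) \<and> (\<forall>x\<in>U'. p x = x)"

context vector_space
begin

lemma basis_listD:
  assumes "basis_list scale W bs"
  shows "distinct bs" "independent (set bs)" "span (set bs) = W"
  using assms by (auto simp: basis_list_def)

lemma basis_list_subspace: "basis_list scale W bs \<Longrightarrow> subspace W"
  using subspace_span basis_listD(3) by blast

lemma basis_list_subset: "basis_list scale W bs \<Longrightarrow> set bs \<subseteq> W"
  using span_superset basis_listD(3) by blast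

lemma basis_list_nth_mem: "basis_list scale W bs \<Longrightarrow> j < length bs \<Longrightarrow> bs ! j \<in> W"
  using basis_list_subset nth_mem by blast

lemma length_basis_list: "basis_list scale W bs \<Longrightarrow> length bs = dim W"
  using basis_card_eq_dim[OF basis_list_subset _ basis_listD(2)] basis_listD(3)
    distinct_card[OF basis_listD(1)] by fastforce

lemma basis_list_fin_dim_subspace:
  assumes "basis_list scale W bs"
  shows "fin_dim_subspace scale W"
  unfolding fin_dim_subspace_def
proof (intro conjI exI)
  show "subspace W" by (rule basis_list_subspace[OF assms])
  show "finite (set bs)" "set bs \<subseteq> W" "span (set bs) = W"
    using basis_list_subset[OF assms] basis_listD(3)[OF assms] by auto
qed

lemma basis_list_of_independent:
  assumes "independent B" "finite B" "span B = W"
  obtains bs where "basis_list scale W bs"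
  using assms finite_distinct_list[OF \<open>finite B\<close>] by (metis basis_list_def)

lemma fin_dim_subspace_obtain_basis_list:
  assumes "fin_dim_subspace scale W"
  obtains bs where "basis_list scale W bs"
proof -
  from assms obtain B where B: "finite B" "B \<subseteq> W" "span B = W"
    unfolding fin_dim_subspace_def by auto
  obtain C where C: "C \<subseteq> B" "independent C" "B \<subseteq> span C"
    using maximal_independent_subset[of B] by blast
  have "span C = W"
    using span_mono[OF C(1)] span_minimal[OF C(3) subspace_span] B(3) by blast
  then show ?thesis
    using basis_list_of_independent C(2) finite_subset[OF C(1) B(1)] that by blast
qed

lemma subspace_obtain_basis_list:
  assumes "basis_list scale W ws" "subspace U" "U \<subseteq> W"
  obtains us where "basis_list scale U us"
proof -
  obtain C where C: "C \<subseteq> U" "independent C" "U \<subseteq> span C"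
    using maximal_independent_subset[of U] by blast
  have "finite C"
    using independent_span_bound[of "set ws" C] C assms basis_listD(3)[OF assms(1)] by auto
  moreover have "span C = U" using C assms(2) span_minimal[of C U] by auto
  ultimately show ?thesis using basis_list_of_independent C(2) that by blast
qed

lemma basis_list_extend:
  assumes ws: "basis_list scale W ws" and us: "basis_list scale U us" and "U \<subseteq> W"
  obtains us' where "basis_list scale W (us @ us')"
proof -
  have "set us \<subseteq> W" using basis_list_subset[OF us] \<open>U \<subseteq> W\<close> by blast
  then obtain B where B: "set us \<subseteq> B" "B \<subseteq> W" "independent B" "W \<subseteq> span B"
    using maximal_independent_subset_extend[of "set us" W] basis_listD(2)[OF us] by blast
  have "finite B"
    using independent_span_bound[of "set ws" B] B(2,3) basis_listD(3)[OF ws] by simp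
  then obtain us' where us': "set us' = B - set us" "distinct us'"
    using finite_distinct_list[of "B - set us"] by blast
  have "span B = W" using span_minimal[OF B(2) basis_list_subspace[OF ws]] B(4) by blast
  then have "basis_list scale W (us @ us')"
    unfolding basis_list_def using us' B(1,3) basis_listD(1)[OF us] by (auto simp: Un_absorb1)
  then show ?thesis by (rule that)
qed

lemma basis_list_append:
  assumes "basis_list scale W (us @ us')"
  shows "basis_list scale (span (set us)) us" "basis_list scale (span (set us')) us'"
    "set us \<inter> set us' = {}"
  using assms by (auto simp: basis_list_def intro: dependent_mono)

lemma basis_list_singleton: "y \<noteq> 0 \<Longrightarrow> basis_list scale (span {y}) [y]"
  by (simp add: basis_list_def)

lemma linear_funpow:
  assumes "Vector_Spaces.linear scale scale f"
  shows "Vector_Spaces.linear scale scale (f ^^ n)"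
proof (induction n)
  case 0
  show ?case using linear_id by (simp add: id_def)
next
  case (Suc n)
  show ?case unfolding funpow.simps(2) by (rule Vector_Spaces.linear_compose[OF Suc assms])
qed

lemma sum_nth_representation:
  assumes "independent (set cs)" "distinct cs" "x \<in> span (set cs)"
  shows "(\<Sum>k<length cs. representation (set cs) x (cs ! k) *s cs ! k) = x"
  using sum_representation_eq[OF assms(1) assms(3) _ order.refl]
  by (simp add: sum_set_conv_sum_nth[OF assms(2)])

lemma rep_mat_comp:
  assumes bs: "independent (set bs)" and cs: "independent (set cs)" "distinct cs"
    and lf: "Vector_Spaces.linear scale scale f" and lg: "Vector_Spaces.linear scale scale g"
    and fds: "\<And>j. j < length ds \<Longrightarrow> f (ds ! j) \<in> span (set cs)"
    and gcs: "\<And>k. k < length cs \<Longrightarrow> g (cs ! k) \<in> span (set bs)"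
  shows "rep_mat scale bs ds (\<lambda>x. g (f x)) = rep_mat scale bs cs g * rep_mat scale cs ds f"
proof (rule eq_matI)
  interpret g: Vector_Spaces.linear scale scale g by (rule lg)
  fix i j assume "i < dim_row (rep_mat scale bs cs g * rep_mat scale cs ds f)"
    and "j < dim_col (rep_mat scale bs cs g * rep_mat scale cs ds f)"
  then have i: "i < length bs" and j: "j < length ds" by auto
  define R where "R k = representation (set cs) (f (ds ! j)) (cs ! k)" for k
  have "f (ds ! j) = (\<Sum>k<length cs. R k *s cs ! k)"
    unfolding R_def by (rule sum_nth_representation[OF cs fds[OF j], symmetric])
  then have "g (f (ds ! j)) = (\<Sum>k<length cs. R k *s g (cs ! k))"
    by (simp add: g.sum g.scale)
  then have "representation (set bs) (g (f (ds ! j))) =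
      (\<lambda>b. \<Sum>k<length cs. representation (set bs) (R k *s g (cs ! k)) b)"
    by (simp only:) (rule representation_sum[OF bs], simp add: span_scale gcs)
  then have "representation (set bs) (g (f (ds ! j))) (bs ! i) =
      (\<Sum>k<length cs. R k * representation (set bs) (g (cs ! k)) (bs ! i))"
    using representation_scale[OF bs gcs] by simp
  also have "\<dots> = (rep_mat scale bs cs g * rep_mat scale cs ds f) $$ (i, j)"
    using i j by (auto simp: R_def mult.commute scalar_prod_def atLeast0LessThan intro!: sum.cong)
  finally show "rep_mat scale bs ds (\<lambda>x. g (f x)) $$ (i, j) =
      (rep_mat scale bs cs g * rep_mat scale cs ds f) $$ (i, j)"
    using i j by simp
qed auto

lemma rep_mat_id:
  assumes "independent (set bs)" "distinct bs"
  shows "rep_mat scale bs bs (\<lambda>x. x) = 1\<^sub>m (length bs)"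
  by (rule eq_matI) (auto simp: representation_basis[OF assms(1)] nth_eq_iff_index_eq[OF assms(2)])

lemma det_rep_mat_basis_indep:
  assumes bs: "basis_list scale W bs" and cs: "basis_list scale W cs"
    and lf: "Vector_Spaces.linear scale scale f" and fW: "f ` W \<subseteq> W"
  shows "det (rep_mat scale bs bs f) = det (rep_mat scale cs cs f)"
proof -
  note B = basis_listD[OF bs] and C = basis_listD[OF cs]
  have lid: "Vector_Spaces.linear scale scale (\<lambda>x. x)" using linear_id by (simp add: id_def)
  have bW: "\<And>j. j < length bs \<Longrightarrow> bs ! j \<in> W" and cW: "\<And>j. j < length cs \<Longrightarrow> cs ! j \<in> W"
    using basis_list_nth_mem[OF bs] basis_list_nth_mem[OF cs] by auto
  let ?P = "rep_mat scale bs cs (\<lambda>x. x)" and ?Q = "rep_mat scale cs bs (\<lambda>x. x)"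
    and ?M = "rep_mat scale cs cs f"
  have len: "length cs = length bs"
    using length_basis_list[OF bs] length_basis_list[OF cs] by simp
  have P: "?P \<in> carrier_mat (length bs) (length bs)" and Q: "?Q \<in> carrier_mat (length bs) (length bs)"
    and M: "?M \<in> carrier_mat (length bs) (length bs)"
    using len by auto
  have "rep_mat scale bs bs (\<lambda>x. x) = ?P * ?Q"
    by (rule rep_mat_comp[OF B(2) C(2,1) lid lid]) (use bW cW B(3) C(3) in auto)
  then have "?P * ?Q = 1\<^sub>m (length bs)"
    using rep_mat_id[OF B(2,1)] by simp
  then have "det ?P * det ?Q = 1"
    using det_mult[OF P Q] by simp
  moreover have "rep_mat scale bs bs f = ?P * (?M * ?Q)"
  proof -
    have "rep_mat scale cs bs f = ?M * ?Q"
      by (rule rep_mat_comp[OF C(2) C(2,1) lid lf]) (use bW cW fW C(3) in auto)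
    moreover have "rep_mat scale bs bs f = ?P * rep_mat scale cs bs f"
      by (rule rep_mat_comp[OF B(2) C(2,1) lf lid]) (use bW cW fW B(3) C(3) in auto)
    ultimately show ?thesis by simp
  qed
  ultimately show ?thesis
    using det_mult[OF P mult_carrier_mat[OF M Q]] det_mult[OF M Q] by (simp add: algebra_simps)
qed

lemma lin_det_eq_det_rep_mat:
  assumes bs: "basis_list scale W bs"
    and "Vector_Spaces.linear scale scale f" "f ` W \<subseteq> W"
  shows "lin_det scale W f = det (rep_mat scale bs bs f)"
proof -
  define cs where "cs = (SOME cs. basis_list scale W cs)"
  have cs: "basis_list scale W cs"
    unfolding cs_def using bs by (rule someI)
  have "lin_det scale W f = det (rep_mat scale cs cs f)"
    by (simp add: lin_det_def rep_mat_def cs_def basis_list_def Let_def)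
  also have "\<dots> = det (rep_mat scale bs bs f)"
    by (rule det_rep_mat_basis_indep[OF cs bs assms(2,3)])
  finally show ?thesis .
qed

lemma lin_det_cong:
  assumes "fin_dim_subspace scale W" and "\<And>x. x \<in> W \<Longrightarrow> f x = g x"
  shows "lin_det scale W f = lin_det scale W g"
proof -
  define cs where "cs = (SOME cs. basis_list scale W cs)"
  have cs: "basis_list scale W cs"
    using fin_dim_subspace_obtain_basis_list[OF assms(1)] unfolding cs_def by (metis someI)
  have "rep_mat scale cs cs f = rep_mat scale cs cs g"
    by (rule eq_matI) (auto simp: assms(2) basis_list_nth_mem[OF cs])
  then show ?thesis
    by (simp add: lin_det_def rep_mat_def cs_def basis_list_def Let_def)
qed

lemma lin_det_comp:
  assumes bs: "basis_list scale W bs"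
    and lf: "Vector_Spaces.linear scale scale f" and fW: "f ` W \<subseteq> W"
    and lg: "Vector_Spaces.linear scale scale g" and gW: "g ` W \<subseteq> W"
  shows "lin_det scale W (\<lambda>x. g (f x)) = lin_det scale W g * lin_det scale W f"
proof -
  note B = basis_listD[OF bs]
  have lgf: "Vector_Spaces.linear scale scale (\<lambda>x. g (f x))"
    using Vector_Spaces.linear_compose[OF lf lg] by (simp add: o_def)
  have "rep_mat scale bs bs (\<lambda>x. g (f x)) = rep_mat scale bs bs g * rep_mat scale bs bs f"
    by (rule rep_mat_comp[OF B(2) B(2,1) lf lg]) (use basis_list_nth_mem[OF bs] fW gW B(3) in auto)
  moreover have "lin_det scale W (\<lambda>x. g (f x)) = det (rep_mat scale bs bs (\<lambda>x. g (f x)))"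
    by (rule lin_det_eq_det_rep_mat[OF bs lgf]) (use fW gW in auto)
  ultimately show ?thesis
    using det_mult[of "rep_mat scale bs bs g" "length bs" "rep_mat scale bs bs f"]
    by (simp add: lin_det_eq_det_rep_mat[OF bs] lf fW lg gW)
qed

lemma lin_det_id: "basis_list scale W bs \<Longrightarrow> lin_det scale W (\<lambda>x. x) = 1"
  using lin_det_eq_det_rep_mat[of W bs "\<lambda>x. x"] rep_mat_id[OF basis_listD(2,1)] linear_id
  by (simp add: id_def)

lemma lin_det_zero_dim: "basis_list scale W [] \<Longrightarrow> Vector_Spaces.linear scale scale f \<Longrightarrow>
    f ` W \<subseteq> W \<Longrightarrow> lin_det scale W f = 1"
  using lin_det_eq_det_rep_mat by (simp add: rep_mat_def)

lemma proj_along_exists: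
  assumes "basis_list scale W (us @ us')"
  obtains p where "proj_along scale (span (set us)) (span (set us')) p"
proof -
  interpret vp: vector_space_pair scale scale ..
  note B = basis_listD[OF assms]
  define p where "p = vp.construct (set (us @ us')) (\<lambda>b. if b \<in> set us' then b else 0)"
  have lp: "Vector_Spaces.linear scale scale p"
    unfolding p_def by (rule vp.linear_construct[OF B(2)])
  have pb: "\<And>b. b \<in> set (us @ us') \<Longrightarrow> p b = (if b \<in> set us' then b else 0)"
    unfolding p_def by (rule vp.construct_basis[OF B(2)])
  have "p x = 0" if "x \<in> span (set us)" for x
    by (rule vp.linear_eq_on[OF lp vp.linear_zero that]) (use pb basis_list_append(3)[OF assms] in auto)
  moreover have "p x = x" if "x \<in> span (set us')" for x
    by (rule vp.linear_eq_on[OF lp _ that]) (use pb linear_id in \<open>auto simp: id_def\<close>)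
  ultimately have "proj_along scale (span (set us)) (span (set us')) p"
    using lp by (simp add: proj_along_def)
  then show ?thesis by (rule that)
qed

lemma proj_along_linear: "proj_along scale U U' p \<Longrightarrow> Vector_Spaces.linear scale scale p"
  by (simp add: proj_along_def)

lemma proj_along_decomp:
  assumes bs: "basis_list scale W (us @ us')"
    and p: "proj_along scale (span (set us)) (span (set us')) p" and y: "y \<in> W"
  shows "p y \<in> span (set us')" "y - p y \<in> span (set us)"
proof -
  interpret p: Vector_Spaces.linear scale scale p using p by (simp add: proj_along_def)
  have "y \<in> span (set us \<union> set us')" using y basis_listD(3)[OF bs] by simp
  then obtain a b where ab: "y = a + b" "a \<in> span (set us)" "b \<in> span (set us')"
    unfolding span_Un by blast
  then have "p y = b" using p p.add[of a b] by (simp add: proj_along_def)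
  then show "p y \<in> span (set us')" "y - p y \<in> span (set us)" using ab by simp_all
qed

lemma representation_append_proj:
  assumes bs: "basis_list scale W (us @ us')"
    and p: "proj_along scale (span (set us)) (span (set us')) p" and y: "y \<in> W"
  shows "c \<notin> set us' \<Longrightarrow> representation (set (us @ us')) y c = representation (set us) (y - p y) c"
    and "c \<notin> set us \<Longrightarrow> representation (set (us @ us')) y c = representation (set us') (p y) c"
proof -
  note B = basis_listD[OF bs] and dec = proj_along_decomp[OF bs p y]
  have "representation (set (us @ us')) y = representation (set (us @ us')) ((y - p y) + p y)"
    by simp
  also have "\<dots> = (\<lambda>c. representation (set us) (y - p y) c + representation (set us') (p y) c)"
    using representation_add[OF B(2), of "p y" "y - p y"] dec span_mono[of _ "set (us @ us')"]
      representation_extend[OF B(2), of "y - p y" "set us"]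
      representation_extend[OF B(2), of "p y" "set us'"]
    by (auto simp: subset_iff)
  finally have rep: "representation (set (us @ us')) y c =
      representation (set us) (y - p y) c + representation (set us') (p y) c" for c
    by simp
  show "c \<notin> set us' \<Longrightarrow> representation (set (us @ us')) y c = representation (set us) (y - p y) c"
    and "c \<notin> set us \<Longrightarrow> representation (set (us @ us')) y c = representation (set us') (p y) c"
    using rep representation_ne_zero by (metis add.right_neutral, metis add_0)
qed

lemma subspace_range_funpow:
  assumes "Vector_Spaces.linear scale scale f"
  shows "subspace (range (f ^^ n))"
proof -
  interpret fn: Vector_Spaces.linear scale scale "f ^^ n"
    by (rule linear_funpow[OF assms])
  show ?thesis using fn.subspace_image[OF subspace_UNIV] by simp
qed

lemma linear_id_plus:
  "Vector_Spaces.linear scale scale n \<Longrightarrow> Vector_Spaces.linear scale scale (\<lambda>x. x + n x)"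
  using vector_space_pair.linear_compose_add[of scale scale "\<lambda>x. x" n] linear_id
  by (simp add: id_def vector_space_pair_def vector_space_axioms)

lemma id_plus_image_subset: "subspace W \<Longrightarrow> n ` W \<subseteq> W \<Longrightarrow> (\<lambda>x. x + n x) ` W \<subseteq> W"
  using subspace_add by blast

lemma rep_mat_block_triangular:
  assumes bs: "basis_list scale W (us @ us')"
    and p: "proj_along scale (span (set us)) (span (set us')) p"
    and fW: "f ` W \<subseteq> W" and fU: "f ` span (set us) \<subseteq> span (set us)"
  obtains C where "rep_mat scale (us @ us') (us @ us') f =
      four_block_mat (rep_mat scale us us f) C (0\<^sub>m (length us') (length us))
        (rep_mat scale us' us' (\<lambda>x. p (f x)))"
    and "C \<in> carrier_mat (length us) (length us')"
proof -
  let ?U = "span (set us)" and ?U' = "span (set us')"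
  let ?M = "rep_mat scale (us @ us') (us @ us') f"
    and ?A = "rep_mat scale us us f" and ?D = "rep_mat scale us' us' (\<lambda>x. p (f x))"
  note dis = basis_list_append(3)[OF bs] and rep = representation_append_proj[OF bs p]
  have p0: "\<And>x. x \<in> ?U \<Longrightarrow> p x = 0"
    using p by (simp add: proj_along_def)
  have UW: "?U \<subseteq> W" "?U' \<subseteq> W"
    using span_mono[of _ "set (us @ us')"] basis_listD(3)[OF bs] by auto
  define C where "C = mat (length us) (length us') (\<lambda>(i, j). ?M $$ (i, j + length us))"
  have "?M = four_block_mat ?A C (0\<^sub>m (length us') (length us)) ?D"
  proof (rule eq_matI)
    fix i j
    assume "i < dim_row (four_block_mat ?A C (0\<^sub>m (length us') (length us)) ?D)"
      and "j < dim_col (four_block_mat ?A C (0\<^sub>m (length us') (length us)) ?D)"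
    then have i: "i < length us + length us'" and j: "j < length us + length us'" by auto
    have col_U: "f (us ! k) \<in> ?U" "f (us ! k) \<in> W" if "k < length us" for k
      using fU UW span_base[OF nth_mem[OF that]] by blast+
    have col_W: "f (us' ! k) \<in> W" if "k < length us'" for k
      using fW UW span_base[OF nth_mem[OF that]] by blast
    have row_us: "us ! k \<notin> set us'" if "k < length us" for k
      using dis nth_mem[OF that] by blast
    have row_us': "us' ! k \<notin> set us" if "k < length us'" for k
      using dis nth_mem[OF that] by blast
    show "?M $$ (i, j) = four_block_mat ?A C (0\<^sub>m (length us') (length us)) ?D $$ (i, j)"
      using i j col_U[of j] col_W[of "j - length us"] row_us[of i] row_us'[of "i - length us"]
        rep p0 by (auto simp: nth_append C_def representation_zero)
  qed auto
  moreover have "C \<in> carrier_mat (length us) (length us')"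
    by (simp add: C_def)
  ultimately show ?thesis
    by (rule that)
qed

lemma lin_det_block_triangular:
  assumes bs: "basis_list scale W (us @ us')"
    and p: "proj_along scale (span (set us)) (span (set us')) p"
    and lf: "Vector_Spaces.linear scale scale f" and fW: "f ` W \<subseteq> W"
    and fU: "f ` span (set us) \<subseteq> span (set us)"
  shows "lin_det scale W f =
    lin_det scale (span (set us)) f * lin_det scale (span (set us')) (\<lambda>x. p (f x))"
proof -
  have lpf: "Vector_Spaces.linear scale scale (\<lambda>x. p (f x))"
    using Vector_Spaces.linear_compose[OF lf proj_along_linear[OF p]] by (simp add: o_def)
  have "span (set us') \<subseteq> W"
    using span_mono[of _ "set (us @ us')"] basis_listD(3)[OF bs] by auto
  then have pfU': "(\<lambda>x. p (f x)) ` span (set us') \<subseteq> span (set us')"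
    using proj_along_decomp(1)[OF bs p] fW by blast
  obtain C where "rep_mat scale (us @ us') (us @ us') f =
      four_block_mat (rep_mat scale us us f) C (0\<^sub>m (length us') (length us))
        (rep_mat scale us' us' (\<lambda>x. p (f x)))"
    and "C \<in> carrier_mat (length us) (length us')"
    by (rule rep_mat_block_triangular[OF bs p fW fU])
  then have "det (rep_mat scale (us @ us') (us @ us') f) =
      det (rep_mat scale us us f) * det (rep_mat scale us' us' (\<lambda>x. p (f x)))"
    using det_four_block_mat_lower_left_zero[OF rep_mat_carrier _ refl rep_mat_carrier] by simp
  then show ?thesis
    using lin_det_eq_det_rep_mat[OF bs lf fW]
      lin_det_eq_det_rep_mat[OF basis_list_append(1)[OF bs] lf fU]
      lin_det_eq_det_rep_mat[OF basis_list_append(2)[OF bs] lpf pfU'] by simp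
qed

section \<open>Determinants of unipotent maps\<close>

lemma lin_det_one_plus_split:
  assumes bs: "basis_list scale W (us @ us')"
    and p: "proj_along scale (span (set us)) (span (set us')) p"
    and ln: "Vector_Spaces.linear scale scale n" and nW: "n ` W \<subseteq> W"
    and nU: "n ` span (set us) \<subseteq> span (set us)"
  shows "lin_det scale W (\<lambda>x. x + n x) =
    lin_det scale (span (set us)) (\<lambda>x. x + n x) * lin_det scale (span (set us')) (\<lambda>x. x + p (n x))"
proof -
  interpret p: Vector_Spaces.linear scale scale p using p by (simp add: proj_along_def)
  have "lin_det scale (span (set us')) (\<lambda>x. p (x + n x)) = lin_det scale (span (set us')) (\<lambda>x. x + p (n x))"
    using p by (intro lin_det_cong basis_list_fin_dim_subspace[OF basis_list_append(2)[OF bs]])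
      (simp add: p.add proj_along_def)
  moreover have "lin_det scale W (\<lambda>x. x + n x) =
      lin_det scale (span (set us)) (\<lambda>x. x + n x) * lin_det scale (span (set us')) (\<lambda>x. p (x + n x))"
    by (rule lin_det_block_triangular[OF bs p linear_id_plus[OF ln]
          id_plus_image_subset[OF basis_list_subspace[OF bs] nW]
          id_plus_image_subset[OF subspace_span nU]])
  ultimately show ?thesis by simp
qed

text \<open>\<open>p \<circ> n\<close> represents the map induced by \<open>n\<close> on \<open>W / span us\<close>.\<close>
lemma proj_along_funpow:
  assumes bs: "basis_list scale W (us @ us')"
    and p: "proj_along scale (span (set us)) (span (set us')) p"
    and ln: "Vector_Spaces.linear scale scale n" and nW: "n ` W \<subseteq> W"
    and nU: "n ` span (set us) \<subseteq> span (set us)" and x: "x \<in> W"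
  shows "((\<lambda>x. p (n x)) ^^ k) (p x) = p ((n ^^ k) x)"
proof (induction k)
  case (Suc k)
  interpret p: Vector_Spaces.linear scale scale p using p by (simp add: proj_along_def)
  interpret n: Vector_Spaces.linear scale scale n by (rule ln)
  have p_n_p: "p (n (p y)) = p (n y)" if "y \<in> W" for y
  proof -
    have "n (y - p y) \<in> span (set us)" using proj_along_decomp(2)[OF bs p that] nU by blast
    then have "p (n (y - p y)) = 0" using p by (simp add: proj_along_def)
    then show ?thesis by (simp add: n.diff p.diff)
  qed
  show ?case
    using Suc p_n_p[OF funpow_image_subset[OF nW x]] by simp
qed simp

lemma proj_along_comp_nilpotent:
  assumes bs: "basis_list scale W (us @ us')"
    and p: "proj_along scale (span (set us)) (span (set us')) p"
    and ln: "Vector_Spaces.linear scale scale n" and nW: "n ` W \<subseteq> W"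
    and nU: "n ` span (set us) \<subseteq> span (set us)"
    and N: "\<And>x. x \<in> W \<Longrightarrow> (n ^^ N) x \<in> span (set us)"
  shows "Vector_Spaces.linear scale scale (\<lambda>x. p (n x))"
    and "(\<lambda>x. p (n x)) ` span (set us') \<subseteq> span (set us')"
    and "\<And>x. x \<in> span (set us') \<Longrightarrow> ((\<lambda>x. p (n x)) ^^ N) x = 0"
proof -
  have U'W: "span (set us') \<subseteq> W"
    using span_mono[of "set us'" "set (us @ us')"] basis_listD(3)[OF bs] by auto
  show "Vector_Spaces.linear scale scale (\<lambda>x. p (n x))"
    using Vector_Spaces.linear_compose[OF ln proj_along_linear[OF p]] by (simp add: o_def)
  show "(\<lambda>x. p (n x)) ` span (set us') \<subseteq> span (set us')"
    using proj_along_decomp(1)[OF bs p] nW U'W by blast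
  show "((\<lambda>x. p (n x)) ^^ N) x = 0" if "x \<in> span (set us')" for x
    using proj_along_funpow[OF bs p ln nW nU subsetD[OF U'W that], of N] p that N[of x] U'W
    by (auto simp: proj_along_def)
qed

lemma nilpotent_kernel_nonzero:
  assumes "n ` W \<subseteq> W" "x \<in> W" "x \<noteq> 0" "(n ^^ N) x = 0"
  shows "\<exists>y\<in>W. y \<noteq> 0 \<and> n y = 0"
  using assms(2-4)
proof (induction N arbitrary: x)
  case (Suc N)
  show ?case
  proof (cases "n x = 0")
    case False
    have "(n ^^ N) (n x) = 0" using Suc.prems(3) by (simp add: funpow_swap1)
    then show ?thesis using Suc.IH[of "n x"] False assms(1) Suc.prems(1) by blast
  qed (use Suc.prems in blast)
qed simp

lemma nilpotent_obtain_kernel_basis: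
  assumes bs: "basis_list scale W (x # xs)" and nW: "n ` W \<subseteq> W"
    and nil: "\<And>x. x \<in> W \<Longrightarrow> (n ^^ N) x = 0"
  obtains y us where "basis_list scale W ([y] @ us)" and "n y = 0"
proof -
  have "x \<in> W" "x \<noteq> 0"
    using basis_list_subset[OF bs] basis_listD(2)[OF bs] dependent_zero by auto
  then obtain y where y: "y \<in> W" "y \<noteq> 0" "n y = 0"
    using nilpotent_kernel_nonzero[OF nW _ _ nil] by blast
  have "span {y} \<subseteq> W"
    using span_minimal[of "{y}" W] y(1) basis_list_subspace[OF bs] by simp
  then show ?thesis
    using basis_list_extend[OF bs basis_list_singleton[OF y(2)]] that y(3) by blast
qed

lemma lin_det_one_plus_nilpotent:
  assumes "basis_list scale W bs" "Vector_Spaces.linear scale scale n" "n ` W \<subseteq> W"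
    and "\<And>x. x \<in> W \<Longrightarrow> (n ^^ N) x = 0"
  shows "lin_det scale W (\<lambda>x. x + n x) = 1"
  using assms
proof (induction "length bs" arbitrary: bs W n rule: less_induct)
  case less
  note bs = less.prems(1) and ln = less.prems(2) and nW = less.prems(3) and nil = less.prems(4)
  interpret n: Vector_Spaces.linear scale scale n by (rule ln)
  show ?case
  proof (cases bs)
    case Nil
    then show ?thesis
      using lin_det_zero_dim bs linear_id_plus[OF ln] nW basis_list_subspace[OF bs]
        id_plus_image_subset by blast
  next
    case Cons
    then obtain y us' where bs': "basis_list scale W ([y] @ us')" and "n y = 0"
      using nilpotent_obtain_kernel_basis bs nW nil by metis
    then have n_y: "n z = 0" if "z \<in> span (set [y])" for z
      using that by (auto simp: span_singleton n.scale)
    then have nU: "n ` span (set [y]) \<subseteq> span (set [y])"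
      using span_zero by auto
    obtain p where p: "proj_along scale (span (set [y])) (span (set us')) p"
      using proj_along_exists[OF bs'] by blast
    have "lin_det scale (span (set [y])) (\<lambda>x. x + n x) = lin_det scale (span (set [y])) (\<lambda>x. x)"
      using n_y by (intro lin_det_cong basis_list_fin_dim_subspace[OF basis_list_append(1)[OF bs']]) simp
    then have det_y: "lin_det scale (span (set [y])) (\<lambda>x. x + n x) = 1"
      using lin_det_id[OF basis_list_append(1)[OF bs']] by simp
    have "(n ^^ N) x \<in> span (set [y])" if "x \<in> W" for x
      using nil[OF that] span_zero by simp
    note pn = proj_along_comp_nilpotent[OF bs' p ln nW nU this]
    have "length us' < length bs"
      using length_basis_list[OF bs] length_basis_list[OF bs'] by simp
    then have "lin_det scale (span (set us')) (\<lambda>x. x + p (n x)) = 1"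
      by (rule less.hyps[OF _ basis_list_append(2)[OF bs'] pn])
    then show ?thesis
      using lin_det_one_plus_split[OF bs' p ln nW nU] det_y by simp
  qed
qed

lemma lin_det_one_plus_shrink:
  assumes ws: "basis_list scale W ws" and us: "basis_list scale U us" and UW: "U \<subseteq> W"
    and ln: "Vector_Spaces.linear scale scale n" and nW: "n ` W \<subseteq> W" and nU: "n ` U \<subseteq> U"
    and N: "\<And>x. x \<in> W \<Longrightarrow> (n ^^ N) x \<in> U"
  shows "lin_det scale W (\<lambda>x. x + n x) = lin_det scale U (\<lambda>x. x + n x)"
proof -
  obtain us' where bs: "basis_list scale W (us @ us')"
    using basis_list_extend[OF ws us UW] by blast
  obtain p where p: "proj_along scale (span (set us)) (span (set us')) p"
    using proj_along_exists[OF bs] by blast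
  have U: "span (set us) = U" using basis_listD(3)[OF us] .
  note pn = proj_along_comp_nilpotent[OF bs p ln nW, unfolded U, OF nU N]
  have "lin_det scale (span (set us')) (\<lambda>x. x + p (n x)) = 1"
    by (rule lin_det_one_plus_nilpotent[OF basis_list_append(2)[OF bs] pn])
  then show ?thesis
    using lin_det_one_plus_split[OF bs p ln nW] nU U by simp
qed

lemma lin_det_comp_one_plus_nilpotent:
  assumes bs: "basis_list scale W bs"
    and lf: "Vector_Spaces.linear scale scale f" and fW: "f ` W \<subseteq> W"
    and ln: "Vector_Spaces.linear scale scale n" and nW: "n ` W \<subseteq> W"
    and nil: "\<And>x. x \<in> W \<Longrightarrow> (n ^^ N) x = 0"
  shows "lin_det scale W (\<lambda>x. f x + n (f x)) = lin_det scale W f"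
  using lin_det_comp[OF bs lf fW linear_id_plus[OF ln] id_plus_image_subset[OF basis_list_subspace[OF bs] nW]]
    lin_det_one_plus_nilpotent[OF bs ln nW nil] by simp

lemma Det_one_plus_eq_lin_det_range:
  assumes lin: "Vector_Spaces.linear scale scale \<phi>"
    and "fin_dim_subspace scale W0" "\<phi> ` W0 \<subseteq> W0" "range (\<phi> ^^ n) \<subseteq> W0"
  obtains M where "\<And>N. M \<le> N \<Longrightarrow> fin_dim_subspace scale (range (\<phi> ^^ N))"
    and "\<And>N. M \<le> N \<Longrightarrow> Det_one_plus scale \<phi> = lin_det scale (range (\<phi> ^^ N)) (\<lambda>v. v + \<phi> v)"
proof -
  define W where "W = (SOME W. fin_dim_subspace scale W \<and> \<phi> ` W \<subseteq> W \<and> (\<exists>n. range (\<phi> ^^ n) \<subseteq> W))"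
  have "fin_dim_subspace scale W \<and> \<phi> ` W \<subseteq> W \<and> (\<exists>n. range (\<phi> ^^ n) \<subseteq> W)"
    unfolding W_def by (rule someI_ex) (use assms(2-4) in blast)
  then obtain M where W: "fin_dim_subspace scale W" "\<phi> ` W \<subseteq> W" "range (\<phi> ^^ M) \<subseteq> W"
    by blast
  obtain ws where ws: "basis_list scale W ws"
    using fin_dim_subspace_obtain_basis_list[OF W(1)] by blast
  have *: "fin_dim_subspace scale (range (\<phi> ^^ N)) \<and>
      Det_one_plus scale \<phi> = lin_det scale (range (\<phi> ^^ N)) (\<lambda>v. v + \<phi> v)" if "M \<le> N" for N
  proof -
    have UW: "range (\<phi> ^^ N) \<subseteq> W" by (rule order.trans[OF range_funpow_antimono[OF that] W(3)])
    obtain us where us: "basis_list scale (range (\<phi> ^^ N)) us"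
      by (rule subspace_obtain_basis_list[OF ws subspace_range_funpow[OF lin] UW])
    have "Det_one_plus scale \<phi> = lin_det scale W (\<lambda>v. v + \<phi> v)"
      unfolding Det_one_plus_def W_def Let_def ..
    also have "\<dots> = lin_det scale (range (\<phi> ^^ N)) (\<lambda>v. v + \<phi> v)"
      by (rule lin_det_one_plus_shrink[OF ws us UW lin W(2) image_range_funpow_subset rangeI])
    finally show ?thesis using basis_list_fin_dim_subspace[OF us] by simp
  qed
  show ?thesis by (rule that[of M]) (simp_all add: *)
qed

lemma lin_det_line:
  assumes "e \<noteq> 0" and "\<And>z. z \<in> span {e} \<Longrightarrow> g z = c *s z"
  shows "lin_det scale (span {e}) g = c"
proof -
  note e = basis_list_singleton[OF assms(1)]
  have "lin_det scale (span {e}) g = lin_det scale (span {e}) (\<lambda>z. c *s z)"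
    by (rule lin_det_cong[OF basis_list_fin_dim_subspace[OF e] assms(2)])
  also have "\<dots> = det (rep_mat scale [e] [e] (\<lambda>z. c *s z))"
    by (rule lin_det_eq_det_rep_mat[OF e linear_scale_self]) (auto intro: span_scale)
  also have "\<dots> = representation {e} (c *s e) e"
    by (subst det_single) (auto simp: rep_mat_def)
  also have "\<dots> = c"
  proof -
    have ind: "independent {e}" using assms(1) by simp
    show ?thesis
      using representation_scale[OF ind span_base[of e "{e}"], of c] representation_basis[OF ind, of e]
      by simp
  qed
  finally show ?thesis .
qed

text \<open>Composing with \<open>1 + n\<close>, which has determinant 1, moves \<open>w\<close> into the line through \<open>e\<close>.\<close>
lemma obtain_square_zero_correction:
  assumes W: "subspace W" "e \<in> W" "w \<in> W" and e: "e \<noteq> 0"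
  obtains n where "Vector_Spaces.linear scale scale n" "n ` W \<subseteq> W" "\<And>x. n (n x) = 0"
    "w + n w \<in> span {e}"
proof (cases "w \<in> span {e}")
  case True
  interpret vp: vector_space_pair scale scale ..
  show ?thesis by (rule that[of "\<lambda>x. 0"]) (use True vp.linear_zero subspace_0[OF W(1)] in auto)
next
  case False
  interpret vp: vector_space_pair scale scale ..
  have ind: "independent {w, e}"
    using independent_insertI[OF False] e by simp
  define n where "n = vp.construct {w, e} (\<lambda>b. e - w)"
  have ln: "Vector_Spaces.linear scale scale n"
    unfolding n_def by (rule vp.linear_construct[OF ind])
  interpret n: Vector_Spaces.linear scale scale n by (rule ln)
  have ne: "n e = e - w" and nw: "n w = e - w"
    unfolding n_def by (simp_all add: vp.construct_basis[OF ind])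
  have n_range: "n x \<in> span {e - w}" for x
    using vp.construct_in_span[OF ind, of "\<lambda>b. e - w" x] by (simp add: n_def)
  have "n (n x) = 0" for x
    using n_range[of x] by (auto simp: span_singleton n.scale n.diff ne nw)
  moreover have "n ` W \<subseteq> W"
    using n_range span_minimal[of "{e - w}" W] subspace_diff[OF W] W(1) by blast
  ultimately show ?thesis
    using that[OF ln] nw span_base[of e "{e}"] by simp
qed

end

section \<open>Restriction of scalars\<close>

locale scalar_restriction =
  fixes \<iota> :: "'k::field \<Rightarrow> 'K::field" and sc :: "'K \<Rightarrow> 'v::ab_group_add \<Rightarrow> 'v"
  assumes hom_add: "\<And>a b. \<iota> (a + b) = \<iota> a + \<iota> b"
    and hom_mult: "\<And>a b. \<iota> (a * b) = \<iota> a * \<iota> b"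
    and hom_one: "\<iota> 1 = 1"
    and K_vector_space: "vector_space sc"
    and finite_extension: "fin_dim_subspace (\<lambda>a y. \<iota> a * y) UNIV"
begin

text \<open>\<open>K\<close> is \<open>V\<close> over \<open>K\<close>, \<open>k\<close> is \<open>V\<close> with scalars restricted to \<open>k\<close>, and \<open>E\<close> is \<open>K\<close> over \<open>k\<close>.\<close>

sublocale K: vector_space sc
  by (rule K_vector_space)

sublocale E: vector_space "\<lambda>a y. \<iota> a * y"
  by unfold_locales (auto simp: hom_add hom_mult hom_one algebra_simps)

sublocale k: vector_space "\<lambda>a v. sc (\<iota> a) v"
  by unfold_locales (auto simp: hom_add hom_mult hom_one K.scale_right_distrib K.scale_left_distrib)

lemma linear_restrict:
  "Vector_Spaces.linear sc sc f \<Longrightarrow> Vector_Spaces.linear (\<lambda>a v. sc (\<iota> a) v) (\<lambda>a v. sc (\<iota> a) v) f"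
  unfolding Vector_Spaces.linear_iff using k.vector_space_axioms by auto

lemma k_span_subset_K_span: "k.span S \<subseteq> K.span S"
  by (rule k.span_minimal[OF K.span_superset]) (auto simp: k.subspace_def K.span_add K.span_scale K.span_zero)

definition ext_basis :: "'K list" where
  "ext_basis = (SOME bs. basis_list (\<lambda>a y. \<iota> a * y) UNIV bs)"

lemma basis_list_ext_basis: "basis_list (\<lambda>a y. \<iota> a * y) UNIV ext_basis"
proof -
  obtain bs where "basis_list (\<lambda>a y. \<iota> a * y) UNIV bs"
    using E.fin_dim_subspace_obtain_basis_list[OF finite_extension] by blast
  then show ?thesis unfolding ext_basis_def by (rule someI)
qed

lemma ext_basis_nonzero: "b \<in> set ext_basis \<Longrightarrow> b \<noteq> 0"
  using E.dependent_zero E.basis_listD(2)[OF basis_list_ext_basis] by blast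

lemma ext_basis_expansion:
  "(\<Sum>b\<in>set ext_basis. \<iota> (E.representation (set ext_basis) x b) * b) = x"
  using E.sum_representation_eq[OF E.basis_listD(2)[OF basis_list_ext_basis], of x "set ext_basis"]
    E.basis_listD(3)[OF basis_list_ext_basis] by simp

definition restrict_basis :: "'v list \<Rightarrow> 'v list" where
  "restrict_basis es = concat (map (\<lambda>e. map (\<lambda>b. sc b e) ext_basis) es)"

lemma restrict_basis_simps [simp]:
  "restrict_basis [] = []" "restrict_basis (e # es) = map (\<lambda>b. sc b e) ext_basis @ restrict_basis es"
  "restrict_basis (es @ es') = restrict_basis es @ restrict_basis es'"
  by (auto simp: restrict_basis_def)

lemma set_restrict_basis: "set (restrict_basis es) = (\<lambda>(b, e). sc b e) ` (set ext_basis \<times> set es)"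
  by (auto simp: restrict_basis_def)

lemma length_restrict_basis: "length (restrict_basis es) = length ext_basis * length es"
  by (induction es) auto

lemma scale_in_k_span_restrict_basis:
  assumes "e \<in> set es"
  shows "sc a e \<in> k.span (set (restrict_basis es))"
proof -
  let ?r = "E.representation (set ext_basis) a"
  have "sc a e = (\<Sum>b\<in>set ext_basis. sc (\<iota> (?r b)) (sc b e))"
    using arg_cong[OF ext_basis_expansion, of "\<lambda>x. sc x e"] by (simp add: K.scale_sum_left)
  also have "\<dots> \<in> k.span (set (restrict_basis es))"
    by (intro k.span_sum k.span_scale k.span_base) (use assms in \<open>auto simp: set_restrict_basis\<close>)
  finally show ?thesis .
qed

lemma k_span_restrict_basis: "k.span (set (restrict_basis es)) = K.span (set es)"
proof
  have "set (restrict_basis es) \<subseteq> K.span (set es)"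
    unfolding set_restrict_basis by (auto intro: K.span_scale[OF K.span_base])
  then show "k.span (set (restrict_basis es)) \<subseteq> K.span (set es)"
    using k_span_subset_K_span K.span_minimal[OF _ K.subspace_span] by blast
  show "K.span (set es) \<subseteq> k.span (set (restrict_basis es))"
  proof
    fix x assume "x \<in> K.span (set es)"
    then obtain u where "x = (\<Sum>e\<in>set es. sc (u e) e)"
      using K.span_finite[of "set es"] by auto
    then show "x \<in> k.span (set (restrict_basis es))"
      by (auto intro!: k.span_sum scale_in_k_span_restrict_basis)
  qed
qed

lemma inj_on_restrict_basis:
  assumes ind: "K.independent (set es)"
  shows "inj_on (\<lambda>(b, e). sc b e) (set ext_basis \<times> set es)"
proof (rule inj_onI, clarify)
  fix b e b' e'
  assume b: "b \<in> set ext_basis" and e: "e \<in> set es" and e': "e' \<in> set es"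
    and eq: "sc b e = sc b' e'"
  have "K.representation (set es) (sc b e) e = b"
    using K.representation_scale[OF ind K.span_base[OF e], of b] K.representation_basis[OF ind e]
    by simp
  moreover have "K.representation (set es) (sc b' e') e = (if e = e' then b' else 0)"
    using K.representation_scale[OF ind K.span_base[OF e'], of b'] K.representation_basis[OF ind e']
    by auto
  ultimately show "b = b' \<and> e = e'"
    using eq ext_basis_nonzero[OF b] by (auto split: if_splits)
qed

lemma k_independent_restrict_basis:
  assumes ind: "K.independent (set es)"
  shows "k.independent (set (restrict_basis es))"
proof (rule k.independent_if_scalars_zero)
  fix g x
  assume sum0: "(\<Sum>x\<in>set (restrict_basis es). sc (\<iota> (g x)) x) = 0"
    and x: "x \<in> set (restrict_basis es)"
  have "(\<Sum>e\<in>set es. sc (\<Sum>b\<in>set ext_basis. \<iota> (g (sc b e)) * b) e) =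
      (\<Sum>(b, e)\<in>set ext_basis \<times> set es. sc (\<iota> (g (sc b e))) (sc b e))"
    by (simp add: K.scale_sum_left sum.cartesian_product[symmetric] sum.swap[of _ "set es"])
  also have "\<dots> = 0"
    using sum0 sum.reindex[OF inj_on_restrict_basis[OF ind], of "\<lambda>x. sc (\<iota> (g x)) x"]
    by (simp add: set_restrict_basis case_prod_unfold)
  finally have "(\<Sum>b\<in>set ext_basis. \<iota> (g (sc b e)) * b) = 0" if "e \<in> set es" for e
    using ind that unfolding K.dependent_finite[OF finite_set] by auto
  then have "g (sc b e) = 0" if "e \<in> set es" "b \<in> set ext_basis" for b e
    using E.basis_listD(2)[OF basis_list_ext_basis] that
    unfolding E.dependent_finite[OF finite_set] by auto
  then show "g x = 0" using x by (auto simp: set_restrict_basis)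
qed simp

lemma basis_list_restrict_basis:
  assumes es: "basis_list sc W es"
  shows "basis_list (\<lambda>a v. sc (\<iota> a) v) W (restrict_basis es)"
proof -
  note E = K.basis_listD[OF es] and B = E.basis_listD[OF basis_list_ext_basis]
  have "distinct (restrict_basis es)"
  proof (rule card_distinct)
    show "card (set (restrict_basis es)) = length (restrict_basis es)"
      unfolding set_restrict_basis length_restrict_basis card_image[OF inj_on_restrict_basis[OF E(2)]]
      using distinct_card[OF B(1)] distinct_card[OF E(1)] by (simp add: card_cartesian_product)
  qed
  then show ?thesis
    using k_independent_restrict_basis[OF E(2)] k_span_restrict_basis[of es] E(3)
    by (simp add: basis_list_def)
qed

lemma linear_mult_left: "Vector_Spaces.linear (\<lambda>a y. \<iota> a * y) (\<lambda>a y. \<iota> a * y) (\<lambda>y. c * y)"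
  unfolding Vector_Spaces.linear_iff
  by (intro conjI allI E.vector_space_axioms) (simp_all add: distrib_left mult.left_commute)

lemma field_norm_eq_det: "field_norm \<iota> c = det (rep_mat (\<lambda>a y. \<iota> a * y) ext_basis ext_basis (\<lambda>y. c * y))"
  unfolding field_norm_def
  by (rule E.lin_det_eq_det_rep_mat[OF basis_list_ext_basis linear_mult_left]) simp

lemma field_norm_mult: "field_norm \<iota> (c * d) = field_norm \<iota> c * field_norm \<iota> d"
  using E.lin_det_comp[OF basis_list_ext_basis linear_mult_left _ linear_mult_left, of d c]
  by (simp add: field_norm_def mult.assoc)

lemma field_norm_one: "field_norm \<iota> 1 = 1"
  using E.lin_det_id[OF basis_list_ext_basis] by (simp add: field_norm_def)

lemma representation_restrict_line:
  assumes e: "e \<noteq> 0" and i: "i < length ext_basis"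
  shows "k.representation ((\<lambda>b. sc b e) ` set ext_basis) (sc x e) (sc (ext_basis ! i) e) =
    E.representation (set ext_basis) x (ext_basis ! i)"
proof -
  let ?M = "(\<lambda>b. sc b e) ` set ext_basis" and ?r = "E.representation (set ext_basis) x"
  have ind: "k.independent ?M"
    using k.basis_listD(2)[OF basis_list_restrict_basis[OF K.basis_list_singleton[OF e]]] by simp
  have M: "sc b e \<in> ?M" if "b \<in> set ext_basis" for b
    using that by (rule imageI)
  have "sc x e = (\<Sum>b\<in>set ext_basis. sc (\<iota> (?r b)) (sc b e))"
    using arg_cong[OF ext_basis_expansion, of "\<lambda>x. sc x e"] by (simp add: K.scale_sum_left)
  then have "k.representation ?M (sc x e) =
      (\<lambda>v. \<Sum>b\<in>set ext_basis. k.representation ?M (sc (\<iota> (?r b)) (sc b e)) v)"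
    by (simp only:) (rule k.representation_sum[OF ind], rule k.span_scale, rule k.span_base[OF M])
  also have "\<dots> = (\<lambda>v. \<Sum>b\<in>set ext_basis. ?r b * k.representation ?M (sc b e) v)"
    by (intro ext sum.cong refl) (simp only: k.representation_scale[OF ind k.span_base[OF M]])
  finally have "k.representation ?M (sc x e) =
      (\<lambda>v. \<Sum>b\<in>set ext_basis. ?r b * k.representation ?M (sc b e) v)" .
  then have "k.representation ?M (sc x e) (sc (ext_basis ! i) e) =
      (\<Sum>b\<in>set ext_basis. ?r b * k.representation ?M (sc b e) (sc (ext_basis ! i) e))"
    by simp
  also have "\<dots> = (\<Sum>b\<in>set ext_basis. if b = ext_basis ! i then ?r b else 0)"
    by (intro sum.cong refl) (auto simp: k.representation_basis[OF ind M] e)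
  also have "\<dots> = ?r (ext_basis ! i)" using i by simp
  finally show ?thesis .
qed

lemma lin_det_restrict_scale_line:
  assumes e: "e \<noteq> 0"
  shows "lin_det (\<lambda>a v. sc (\<iota> a) v) (K.span {e}) (\<lambda>x. sc c x) = field_norm \<iota> c"
proof -
  let ?es = "map (\<lambda>b. sc b e) ext_basis"
  have bs: "basis_list (\<lambda>a v. sc (\<iota> a) v) (K.span {e}) ?es"
    using basis_list_restrict_basis[OF K.basis_list_singleton[OF e]] by simp
  have "rep_mat (\<lambda>a v. sc (\<iota> a) v) ?es ?es (\<lambda>x. sc c x) =
      rep_mat (\<lambda>a y. \<iota> a * y) ext_basis ext_basis (\<lambda>y. c * y)"
    by (rule eq_matI) (simp_all add: representation_restrict_line[OF e])
  moreover have "lin_det (\<lambda>a v. sc (\<iota> a) v) (K.span {e}) (\<lambda>x. sc c x) =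
      det (rep_mat (\<lambda>a v. sc (\<iota> a) v) ?es ?es (\<lambda>x. sc c x))"
    by (rule k.lin_det_eq_det_rep_mat[OF bs linear_restrict[OF K.linear_scale_self]])
      (auto intro: K.span_scale)
  ultimately show ?thesis
    by (simp add: field_norm_eq_det)
qed

lemma lin_det_restrict_scalars_eigenvector:
  assumes bs: "basis_list sc W (e # es)"
    and IH: "\<And>g. Vector_Spaces.linear sc sc g \<Longrightarrow> g ` K.span (set es) \<subseteq> K.span (set es) \<Longrightarrow>
      lin_det (\<lambda>a v. sc (\<iota> a) v) (K.span (set es)) g = field_norm \<iota> (lin_det sc (K.span (set es)) g)"
    and lg: "Vector_Spaces.linear sc sc g" and gW: "g ` W \<subseteq> W" and ge: "g e \<in> K.span {e}"
  shows "lin_det (\<lambda>a v. sc (\<iota> a) v) W g = field_norm \<iota> (lin_det sc W g)"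
proof -
  interpret g: Vector_Spaces.linear sc sc g by (rule lg)
  have bs': "basis_list sc W ([e] @ es)" using bs by simp
  have e: "e \<noteq> 0" using K.basis_listD(2)[OF bs] K.dependent_zero by force
  obtain c where "g e = sc c e" using ge K.span_singleton by auto
  then have gE: "g z = sc c z" if "z \<in> K.span {e}" for z
    using that by (auto simp: K.span_singleton g.scale mult.commute)
  then have gE_sub: "g ` K.span (set [e]) \<subseteq> K.span (set [e])"
    using K.span_scale by auto
  obtain p where p: "proj_along sc (K.span (set [e])) (K.span (set es)) p"
    using K.proj_along_exists[OF bs'] by blast
  have pk: "proj_along (\<lambda>a v. sc (\<iota> a) v)
      (k.span (set (restrict_basis [e]))) (k.span (set (restrict_basis es))) p"
    unfolding k_span_restrict_basis using p linear_restrict by (simp add: proj_along_def)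
  have kbs: "basis_list (\<lambda>a v. sc (\<iota> a) v) W (restrict_basis [e] @ restrict_basis es)"
    using basis_list_restrict_basis[OF bs'] by simp
  have line_k: "lin_det (\<lambda>a v. sc (\<iota> a) v) (K.span {e}) g = field_norm \<iota> c"
    using k.lin_det_cong[OF k.basis_list_fin_dim_subspace gE] lin_det_restrict_scale_line[OF e]
      basis_list_restrict_basis[OF K.basis_list_singleton[OF e]] by simp
  have lpg: "Vector_Spaces.linear sc sc (\<lambda>x. p (g x))"
    using Vector_Spaces.linear_compose[OF lg K.proj_along_linear[OF p]] by (simp add: o_def)
  have "K.span (set es) \<subseteq> W"
    using K.span_mono[of "set es" "set (e # es)"] K.basis_listD(3)[OF bs] by auto
  then have pgU: "(\<lambda>x. p (g x)) ` K.span (set es) \<subseteq> K.span (set es)"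
    using K.proj_along_decomp(1)[OF bs' p] gW by blast
  have "lin_det sc W g = c * lin_det sc (K.span (set es)) (\<lambda>x. p (g x))"
    using K.lin_det_block_triangular[OF bs' p lg gW gE_sub] K.lin_det_line[OF e gE] by simp
  moreover have "lin_det (\<lambda>a v. sc (\<iota> a) v) W g =
      field_norm \<iota> c * lin_det (\<lambda>a v. sc (\<iota> a) v) (K.span (set es)) (\<lambda>x. p (g x))"
    using k.lin_det_block_triangular[OF kbs pk linear_restrict[OF lg] gW,
        unfolded k_span_restrict_basis, OF gE_sub] line_k by simp
  ultimately show ?thesis
    using IH[OF lpg pgU] field_norm_mult by simp
qed

lemma lin_det_restrict_scalars:
  assumes "basis_list sc W es" "Vector_Spaces.linear sc sc f" "f ` W \<subseteq> W"
  shows "lin_det (\<lambda>a v. sc (\<iota> a) v) W f = field_norm \<iota> (lin_det sc W f)"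
  using assms
proof (induction es arbitrary: W f)
  case Nil
  have "basis_list (\<lambda>a v. sc (\<iota> a) v) W []"
    using basis_list_restrict_basis[OF Nil.prems(1)] by simp
  then show ?case
    using K.lin_det_zero_dim[OF Nil.prems] k.lin_det_zero_dim linear_restrict[OF Nil.prems(2)]
      Nil.prems(3) field_norm_one by simp
next
  case (Cons e es)
  note bs = Cons.prems(1) and lf = Cons.prems(2) and fW = Cons.prems(3)
  have sW: "K.subspace W" and eW: "e \<in> W" and e: "e \<noteq> 0"
    using K.basis_list_subspace[OF bs] K.basis_list_subset[OF bs] K.basis_listD(2)[OF bs]
      K.dependent_zero by auto
  obtain n where ln: "Vector_Spaces.linear sc sc n" and nW: "n ` W \<subseteq> W"
    and nn: "\<And>x. n (n x) = 0" and ne: "f e + n (f e) \<in> K.span {e}"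
    using K.obtain_square_zero_correction[OF sW eW _ e, of "f e"] fW eW by blast
  have nil: "(n ^^ 2) x = 0" for x
    using nn by (simp add: numeral_2_eq_2)
  have lg: "Vector_Spaces.linear sc sc (\<lambda>x. f x + n (f x))"
    using Vector_Spaces.linear_compose[OF lf K.linear_id_plus[OF ln]] by (simp add: o_def)
  have gW: "(\<lambda>x. f x + n (f x)) ` W \<subseteq> W"
    using K.id_plus_image_subset[OF sW nW] fW by auto
  have bs_es: "basis_list sc (K.span (set es)) es"
    using K.basis_list_append(2)[of W "[e]" es] bs by simp
  have "lin_det (\<lambda>a v. sc (\<iota> a) v) W (\<lambda>x. f x + n (f x)) =
      field_norm \<iota> (lin_det sc W (\<lambda>x. f x + n (f x)))"
    by (rule lin_det_restrict_scalars_eigenvector[OF bs Cons.IH[OF bs_es] lg gW ne])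
  moreover have "lin_det sc W (\<lambda>x. f x + n (f x)) = lin_det sc W f"
    by (rule K.lin_det_comp_one_plus_nilpotent[OF bs lf fW ln nW nil])
  moreover have "lin_det (\<lambda>a v. sc (\<iota> a) v) W (\<lambda>x. f x + n (f x)) = lin_det (\<lambda>a v. sc (\<iota> a) v) W f"
    by (rule k.lin_det_comp_one_plus_nilpotent[OF basis_list_restrict_basis[OF bs]
          linear_restrict[OF lf] fW linear_restrict[OF ln] nW nil])
  ultimately show ?case by simp
qed

lemma finite_potent_obtain_invariant_subspace:
  assumes lin: "Vector_Spaces.linear sc sc \<phi>" and fp: "finite_potent sc \<phi>"
  obtains W n where "fin_dim_subspace sc W" "fin_dim_subspace (\<lambda>a v. sc (\<iota> a) v) W"
    "\<phi> ` W \<subseteq> W" "range (\<phi> ^^ n) \<subseteq> W"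
proof -
  interpret \<phi>: Vector_Spaces.linear sc sc \<phi> by (rule lin)
  obtain n where fd: "fin_dim_subspace sc (K.span (range (\<phi> ^^ n)))"
    using fp unfolding finite_potent_def by blast
  then obtain ws where ws: "basis_list sc (K.span (range (\<phi> ^^ n))) ws"
    by (rule K.fin_dim_subspace_obtain_basis_list)
  have "\<phi> ` K.span (range (\<phi> ^^ n)) \<subseteq> K.span (range (\<phi> ^^ n))"
    using K.span_mono[OF image_range_funpow_subset] by (simp add: \<phi>.span_image[symmetric])
  then show ?thesis
    using that[OF fd k.basis_list_fin_dim_subspace[OF basis_list_restrict_basis[OF ws]]]
      K.span_superset by blast
qed

end

theorem proposition3p8:
  fixes \<iota> :: "'k::field \<Rightarrow> 'K::field"
    and sc :: "'K \<Rightarrow> 'v::ab_group_add \<Rightarrow> 'v"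
    and \<phi> :: "'v \<Rightarrow> 'v"
  assumes hom_add: "\<And>a b. \<iota> (a + b) = \<iota> a + \<iota> b"
    and hom_mult: "\<And>a b. \<iota> (a * b) = \<iota> a * \<iota> b"
    and hom_one: "\<iota> 1 = 1"
    and finite_ext: "fin_dim_subspace (\<lambda>a y. \<iota> a * y) UNIV"
    and vs: "vector_space sc"
    and lin: "Vector_Spaces.linear sc sc \<phi>"
    and fp: "finite_potent sc \<phi>"
    and inv: "bij (\<lambda>v. v + \<phi> v)"
  shows "Det_one_plus (\<lambda>a v. sc (\<iota> a) v) \<phi> = field_norm \<iota> (Det_one_plus sc \<phi>)"
proof -
  interpret scalar_restriction \<iota> sc
    by (rule scalar_restriction.intro[OF hom_add hom_mult hom_one vs finite_ext])
  obtain W n where W: "fin_dim_subspace sc W" "fin_dim_subspace (\<lambda>a v. sc (\<iota> a) v) W"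
    "\<phi> ` W \<subseteq> W" "range (\<phi> ^^ n) \<subseteq> W"
    by (rule finite_potent_obtain_invariant_subspace[OF lin fp])
  obtain M where fd_M: "\<And>N. M \<le> N \<Longrightarrow> fin_dim_subspace sc (range (\<phi> ^^ N))"
    and Det_K: "\<And>N. M \<le> N \<Longrightarrow> Det_one_plus sc \<phi> = lin_det sc (range (\<phi> ^^ N)) (\<lambda>v. v + \<phi> v)"
    using K.Det_one_plus_eq_lin_det_range[OF lin W(1,3,4)] by blast
  obtain M' where Det_k: "\<And>N. M' \<le> N \<Longrightarrow> Det_one_plus (\<lambda>a v. sc (\<iota> a) v) \<phi> =
      lin_det (\<lambda>a v. sc (\<iota> a) v) (range (\<phi> ^^ N)) (\<lambda>v. v + \<phi> v)"
    using k.Det_one_plus_eq_lin_det_range[OF linear_restrict[OF lin] W(2,3,4)] by blast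
  define N where "N = max M M'"
  obtain us where us: "basis_list sc (range (\<phi> ^^ N)) us"
    using fd_M[of N] K.fin_dim_subspace_obtain_basis_list by (auto simp: N_def)
  have "lin_det (\<lambda>a v. sc (\<iota> a) v) (range (\<phi> ^^ N)) (\<lambda>v. v + \<phi> v) =
      field_norm \<iota> (lin_det sc (range (\<phi> ^^ N)) (\<lambda>v. v + \<phi> v))"
    by (rule lin_det_restrict_scalars[OF us K.linear_id_plus[OF lin]
          K.id_plus_image_subset[OF K.subspace_range_funpow[OF lin] image_range_funpow_subset]])
  then show ?thesis
    using Det_K[of N] Det_k[of N] by (simp add: N_def)
qed

end
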